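(* Fix $\varepsilon>0$, put $t^{(a,b)}:=\frac{1-b}a$, let $Z_0^N$ start at $\lfloor N/\sqrt{\log N}\rfloor$, and let $Y_0^N(t):=\log_N^+\big(Z_0^N(t\varphi_N^{-1}\log N)\big)$ for $t\in[0,t^{(a,b)}+\varepsilon]$. Define $\widetilde Y_0^N(t):=\max_{t\le u\le t^{(a,b)}+\varepsilon}Y_0^N(u)$. Then $$\sup_{0\le t\le t^{(a,b)}+\varepsilon}\big|\widetilde Y_0^N(t)-Y_0^N(t)\big|\to0\quad\text{in probability as }N\to\infty.$$
   Context: Standing assumptions: $a>0$, $0<\varphi_N\le1$, $-\log_N\varphi_N\to b\in[0,1)$. $Z_0^N$ is the Markov chain on $\mathbb N_0$ jumping $k\to k+1$ at rate $k$ and $k\to k-1$ at rate $(1+a\varphi_N)k$. $\log_N^+(x):=\max\{\log x/\log N,0\}$ for $x>0$, $\log_N^+(0):=0$. *)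

theory Defs
  imports "HOL-Probability.Probability"
begin

definition logNp :: "nat \<Rightarrow> real \<Rightarrow> real" where
  "logNp N x = (if x > 0 then max (ln x / ln (real N)) 0 else 0)"

definition driving_space :: "real \<Rightarrow> (nat \<Rightarrow> real \<times> bool) measure" where
  "driving_space p = PiM UNIV (\<lambda>_. density lborel (exponential_density 1)
                                     \<Otimes>\<^sub>M measure_pmf (bernoulli_pmf p))"

text \<open>Jump chain of the birth-death chain with up rate k and down rate (1+c)k:
  from k>0 go up iff B_n is true (probability 1/(2+c)); 0 is absorbing.\<close>
fun jump_chain :: "nat \<Rightarrow> (nat \<Rightarrow> real \<times> bool) \<Rightarrow> nat \<Rightarrow> nat" where
  "jump_chain z0 \<omega> 0 = z0"
| "jump_chain z0 \<omega> (Suc n) =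
     (let k = jump_chain z0 \<omega> n in
      if k = 0 then 0 else if snd (\<omega> n) then k + 1 else k - 1)"

text \<open>Jump times: holding time in state k>0 is E_n / ((2+c) k) ~ Exp((2+c)k);
  infinite in the absorbing state 0.\<close>
fun jump_time :: "real \<Rightarrow> nat \<Rightarrow> (nat \<Rightarrow> real \<times> bool) \<Rightarrow> nat \<Rightarrow> ereal" where
  "jump_time c z0 \<omega> 0 = 0"
| "jump_time c z0 \<omega> (Suc n) =
     (let k = jump_chain z0 \<omega> n in
      if k = 0 then \<infinity>
      else jump_time c z0 \<omega> n + ereal (fst (\<omega> n) / ((2 + c) * real k)))"

text \<open>The continuous-time chain: value at time t >= 0 is the state of the jump chain
  in the holding interval containing t (after explosion, a null event, it is set to 0).\<close>
definition bd_chain :: "real \<Rightarrow> nat \<Rightarrow> (nat \<Rightarrow> real \<times> bool) \<Rightarrow> real \<Rightarrow> nat" where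
  "bd_chain c z0 \<omega> t =
     (if \<exists>n. ereal t < jump_time c z0 \<omega> n
      then jump_chain z0 \<omega> ((LEAST n. ereal t < jump_time c z0 \<omega> n) - 1)
      else 0)"

end

theory Submission
  imports Defs "HOL-Real_Asymp.Real_Asymp"
begin

text \<open>Only upward excursions of \<open>Y\<close> matter: \<open>\<widetilde>Y(t) - Y(t) > \<delta>\<close> forces the chain to
  climb, after some time, above \<open>N\<^sup>\<delta>\<close> times its earlier value (or \<open>N\<^sup>\<delta>\<close> if that value is 0), so
  only the order of the visited states, not the holding times, is relevant. The jump chain
  moves up with probability at most 1/2, so it is a nonnegative supermartingale and, for each
  dyadic level \<open>2\<^sup>j\<close>, the chance of climbing from \<open>2\<^sup>j\<close> to \<open>N\<^sup>\<delta> 2\<^sup>j / 2\<close> is at most \<open>4 / N\<^sup>\<delta>\<close>.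
  Summing over the \<open>log\<^sub>2 N + 1\<close> levels below the starting point \<open>\<le> N\<close> bounds the probability
  by \<open>O(log N / N\<^sup>\<delta>)\<close>.\<close>

definition bd_step :: "nat \<Rightarrow> bool \<Rightarrow> nat" where
  "bd_step k up = (if k = 0 then 0 else if up then k + 1 else k - 1)"

lemma jump_chain_Suc_bd_step:
  "jump_chain z \<omega> (Suc n) = bd_step (jump_chain z \<omega> n) (snd (\<omega> n))"
  by (simp add: bd_step_def Let_def)

lemma jump_chain_Suc_shift:
  "jump_chain z \<omega> (Suc n) = jump_chain (bd_step z (snd (\<omega> 0))) (\<lambda>i. \<omega> (Suc i)) n"
  by (induction n) (simp_all add: jump_chain_Suc_bd_step del: jump_chain.simps(2))

text \<open>The argument \<open>r\<close> of \<open>rises\<close> carries the minimum of the states visited so far; the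
  event is that the chain exceeds \<open>C\<close> times this running minimum (floored at 1). Recursing on
  the first step rather than quantifying over pairs of times makes both the supermartingale
  induction and measurability straightforward.\<close>
fun rises :: "real \<Rightarrow> nat \<Rightarrow> real \<Rightarrow> nat \<Rightarrow> (nat \<Rightarrow> real \<times> bool) \<Rightarrow> bool" where
  "rises C 0 r x \<omega> \<longleftrightarrow> C * max r 1 < real x"
| "rises C (Suc n) r x \<omega> \<longleftrightarrow> C * max r 1 < real x \<or>
     rises C n (min r (real x)) (bd_step x (snd (\<omega> 0))) (\<lambda>i. \<omega> (Suc i))"

lemma rises_Suc: "rises C n r x \<omega> \<Longrightarrow> rises C (Suc n) r x \<omega>"
  by (induction n arbitrary: r x \<omega>) auto

lemma rises_if_exceeds:
  assumes "1 \<le> C" and "j \<le> i"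
    and "C * max (min r (real (jump_chain x \<omega> j))) 1 < real (jump_chain x \<omega> i)"
  shows "rises C i r x \<omega>"
  using assms(2,3)
proof (induction i arbitrary: j r x \<omega>)
  case 0
  have "C * max r 1 < real x"
  proof (cases "r \<le> real x")
    case False
    have "real x \<le> 1 * max (real x) 1" by simp
    also have "\<dots> \<le> C * max (real x) 1"
      using \<open>1 \<le> C\<close> by (intro mult_right_mono) auto
    finally have "real x \<le> C * max (real x) 1" .
    with 0 False show ?thesis by simp
  qed (use 0 in simp)
  then show ?case by simp
next
  case (Suc i)
  note jump_chain.simps(2)[simp del] jump_chain_Suc_shift[simp]
  let ?x' = "bd_step x (snd (\<omega> 0))" and ?\<omega>' = "\<lambda>i. \<omega> (Suc i)" and ?r' = "min r (real x)"
  have "rises C i ?r' ?x' ?\<omega>'"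
  proof (cases j)
    case 0
    have "C * max (min ?r' (real (jump_chain ?x' ?\<omega>' 0))) 1 \<le> C * max (min r (real x)) 1"
      using \<open>1 \<le> C\<close> by (intro mult_left_mono) auto
    with Suc.prems 0 show ?thesis
      by (intro Suc.IH[of 0]) auto
  next
    case (Suc j')
    have "C * max (min ?r' (real (jump_chain ?x' ?\<omega>' j'))) 1
          \<le> C * max (min r (real (jump_chain x \<omega> j))) 1"
      using \<open>1 \<le> C\<close> Suc by (intro mult_left_mono) auto
    with Suc.prems Suc show ?thesis
      by (intro Suc.IH[of j']) auto
  qed
  then show ?case by simp
qed

lemma jump_chain_le_if_not_rises:
  assumes "1 \<le> C" "\<not> rises C i r x \<omega>" "j \<le> i"
  shows "real (jump_chain x \<omega> i) \<le> C * max (real (jump_chain x \<omega> j)) 1"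
proof (rule ccontr)
  assume "\<not> ?thesis"
  moreover have "C * max (min r (real (jump_chain x \<omega> j))) 1 \<le> C * max (real (jump_chain x \<omega> j)) 1"
    using assms(1) by (intro mult_left_mono) auto
  ultimately have "C * max (min r (real (jump_chain x \<omega> j))) 1 < real (jump_chain x \<omega> i)"
    by linarith
  with rises_if_exceeds[OF assms(1,3)] assms(2) show False by blast
qed

lemma min_one_biased_step_le:
  fixes p u d :: real
  assumes "0 \<le> p" "p \<le> 1/2" "0 < d"
  shows "p * min 1 (u + d) + (1 - p) * min 1 (u - d) \<le> min 1 u"
proof (cases "u + d \<le> 1")
  case True
  then have "p * min 1 (u + d) + (1 - p) * min 1 (u - d) = u + (2*p - 1) * d"
    using assms by (simp add: algebra_simps)
  also have "\<dots> \<le> u" using assms by (simp add: mult_nonpos_nonneg)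
  finally show ?thesis using True assms by simp
next
  case False
  show ?thesis
  proof (cases "u \<le> 1")
    case True
    have "p * min 1 (u + d) + (1 - p) * min 1 (u - d) \<le> p + (1 - p) * (u - d)"
      using False assms by (intro add_mono mult_left_mono) auto
    also have "\<dots> \<le> u"
    proof -
      have "p * (1 - u) \<le> p * d" using False assms by (intro mult_left_mono) auto
      also have "\<dots> \<le> (1 - p) * d" using assms by (intro mult_right_mono) auto
      finally show ?thesis by (simp add: algebra_simps)
    qed
    finally show ?thesis using True by simp
  next
    case False
    have "p * min 1 (u + d) + (1 - p) * min 1 (u - d) \<le> p * 1 + (1 - p) * 1"
      using assms by (intro add_mono mult_left_mono) auto
    then show ?thesis using False by simp
  qed
qed

text \<open>Level \<open>j\<close> watches for a climb to \<open>C 2\<^sup>j / 2\<close>. It is activated once the running minimum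
  \<open>r\<close> has dropped to \<open>2\<^sup>j\<close>; from then on \<open>min 1 (2 x / (C 2\<^sup>j))\<close> is a supermartingale because the
  walk has nonpositive drift, and before that the constant \<open>4 / C\<close> dominates the value at
  activation.\<close>
definition level_potential :: "real \<Rightarrow> real \<Rightarrow> real \<Rightarrow> nat \<Rightarrow> real" where
  "level_potential C r y j = (if r \<le> 2^j then min 1 (2 * y / (C * 2^j)) else 4 / C)"

definition rise_potential :: "real \<Rightarrow> nat \<Rightarrow> real \<Rightarrow> nat \<Rightarrow> real" where
  "rise_potential C K r x = (\<Sum>j\<le>K. level_potential C r (real x) j)"

lemma level_potential_biased_step_le:
  assumes "0 < C" "0 \<le> p" "p \<le> 1/2"
  shows "p * level_potential C (min r y) (y + 1) j + (1 - p) * level_potential C (min r y) (y - 1) j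
         \<le> level_potential C r y j"
proof -
  define u where "u = 2 * y / (C * 2^j)"
  define d where "d = 2 / (C * 2^j)"
  have d: "0 < d" using \<open>0 < C\<close> by (simp add: d_def)
  have up: "2 * (y + 1) / (C * 2^j) = u + d" and down: "2 * (y - 1) / (C * 2^j) = u - d"
    unfolding u_def d_def by (simp_all add: add_divide_distrib diff_divide_distrib ring_distribs)
  consider "r \<le> 2^j" | "\<not> r \<le> 2^j" "y \<le> 2^j" | "\<not> r \<le> 2^j" "\<not> y \<le> 2^j"
    by blast
  then show ?thesis
  proof cases
    case 1
    then show ?thesis
      using min_one_biased_step_le[OF assms(2,3) d, of u]
      unfolding level_potential_def up down u_def[symmetric] by (simp add: min.coboundedI1)
  next
    case 2
    have "(1::real) \<le> 2^j" by simp
    have "u + d = 2 * (y + 1) / (C * 2^j)" by (rule up[symmetric])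
    also have "\<dots> \<le> 2 * (2 * 2^j) / (C * 2^j)"
    proof (rule divide_right_mono)
      show "2 * (y + 1) \<le> 2 * (2 * 2^j)"
        using 2 \<open>(1::real) \<le> 2^j\<close> by (smt (verit))
    qed (use \<open>0 < C\<close> in simp)
    also have "\<dots> = 4 / C" by simp
    finally have "min 1 (u + d) \<le> 4 / C" "min 1 (u - d) \<le> 4 / C"
      using d by auto
    then have "p * min 1 (u + d) + (1 - p) * min 1 (u - d) \<le> p * (4 / C) + (1 - p) * (4 / C)"
      using assms by (intro add_mono mult_left_mono) auto
    also have "\<dots> = 4 / C" by (simp add: add_divide_distrib[symmetric])
    finally show ?thesis
      using 2 unfolding level_potential_def up down u_def[symmetric] by simp
  next
    case 3
    then have "\<not> min r y \<le> 2^j" by simp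
    with 3 show ?thesis by (simp add: level_potential_def add_divide_distrib[symmetric])
  qed
qed

lemma rise_potential_nonneg: "0 < C \<Longrightarrow> 0 \<le> rise_potential C K r x"
  unfolding rise_potential_def level_potential_def by (intro sum_nonneg) auto

lemma rise_potential_bd_step_le:
  assumes "0 < C" "0 \<le> p" "p \<le> 1/2"
  shows "p * rise_potential C K (min r (real x)) (bd_step x True)
         + (1 - p) * rise_potential C K (min r (real x)) (bd_step x False)
         \<le> rise_potential C K r x"
proof (cases "x = 0")
  case True
  then show ?thesis
    unfolding rise_potential_def bd_step_def
    using \<open>0 < C\<close> by (auto simp: algebra_simps level_potential_def intro!: sum_mono)
next
  case False
  then have "real (bd_step x True) = real x + 1" "real (bd_step x False) = real x - 1"
    by (auto simp: bd_step_def of_nat_diff)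
  then show ?thesis
    using level_potential_biased_step_le[OF assms, where y = "real x" and r = r]
    unfolding rise_potential_def sum_distrib_left sum.distrib[symmetric]
    by (auto intro!: sum_mono)
qed

lemma exists_dyadic_level:
  fixes y :: real
  assumes "1 \<le> y" "y \<le> 2^K"
  shows "\<exists>j\<le>K. y \<le> 2^j \<and> 2^j < 2 * y"
  using assms(2)
proof (induction K)
  case (Suc K)
  then show ?case
    by (cases "y \<le> 2^K") (auto intro: le_SucI)
qed (use assms(1) in auto)

lemma rise_potential_ge_1:
  assumes "0 < C" "max r 1 \<le> 2^K" "C * max r 1 < real x"
  shows "1 \<le> rise_potential C K r x"
proof -
  obtain j where j: "j \<le> K" "max r 1 \<le> 2^j" "2^j < 2 * max r 1"
    using exists_dyadic_level[of "max r 1" K] assms(2) by auto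
  have "C * 2^j < C * (2 * max r 1)"
    using j(3) assms(1) by (rule mult_strict_left_mono)
  with assms have "C * 2^j < 2 * real x"
    by linarith
  with assms have "1 \<le> 2 * real x / (C * 2^j)"
    by (simp add: field_simps)
  with j(2) have "level_potential C r (real x) j = 1"
    by (simp add: level_potential_def)
  moreover have "level_potential C r (real x) j \<le> rise_potential C K r x"
    unfolding rise_potential_def using j(1) \<open>0 < C\<close>
    by (intro member_le_sum) (auto simp: level_potential_def)
  ultimately show ?thesis by simp
qed

lemma rise_potential_le:
  assumes "0 < C" "real x \<le> r"
  shows "rise_potential C K r x \<le> (real K + 1) * (4 / C)"
proof -
  have "level_potential C r (real x) j \<le> 4 / C" for j
  proof (cases "r \<le> 2^j")
    case True
    have "2 * real x / (C * 2^j) \<le> 2 * 2^j / (C * 2^j)"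
    proof (rule divide_right_mono)
      show "2 * real x \<le> 2 * 2^j" using True assms by linarith
    qed (use assms in simp)
    also have "\<dots> \<le> 4 / C" using assms by (simp add: field_simps)
    finally show ?thesis using True by (simp add: level_potential_def)
  qed (simp add: level_potential_def)
  then have "rise_potential C K r x \<le> (\<Sum>j\<le>K. 4 / C)"
    unfolding rise_potential_def by (intro sum_mono)
  then show ?thesis by (simp add: algebra_simps)
qed

definition driving_factor :: "real \<Rightarrow> (real \<times> bool) measure" where
  "driving_factor p = density lborel (exponential_density 1) \<Otimes>\<^sub>M measure_pmf (bernoulli_pmf p)"

lemma prob_space_driving_factor: "prob_space (driving_factor p)"
  unfolding driving_factor_def
  by (intro prob_space_pair prob_space_exponential_density prob_space_measure_pmf) simp

lemma driving_space_eq_PiM: "driving_space p = PiM UNIV (\<lambda>_. driving_factor p)"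
  unfolding driving_space_def driving_factor_def ..

lemma nn_integral_driving_factor_snd:
  assumes "0 \<le> p" "p \<le> 1"
  shows "(\<integral>\<^sup>+s. f (snd s) \<partial>driving_factor p) = f True * ennreal p + f False * ennreal (1 - p)"
proof -
  interpret E: prob_space "density lborel (exponential_density (1::real))"
    by (rule prob_space_exponential_density) simp
  interpret P: pair_sigma_finite "density lborel (exponential_density (1::real))"
    "measure_pmf (bernoulli_pmf p)" ..
  have "(\<integral>\<^sup>+s. f (snd s) \<partial>driving_factor p)
        = (\<integral>\<^sup>+b. \<integral>\<^sup>+e. f (snd (e, b))
             \<partial>density lborel (exponential_density 1) \<partial>measure_pmf (bernoulli_pmf p))"
    unfolding driving_factor_def by (rule P.nn_integral_snd[symmetric]) simp
  also have "\<dots> = (\<integral>\<^sup>+b. f b \<partial>measure_pmf (bernoulli_pmf p))"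
    using E.emeasure_space_1 by simp
  also have "\<dots> = f True * ennreal p + f False * ennreal (1 - p)"
    using assms by (subst nn_integral_bernoulli_pmf) auto
  finally show ?thesis .
qed

lemma measurable_shift:
  "(\<lambda>\<omega> i. \<omega> (Suc i)) \<in> PiM UNIV (\<lambda>_. M) \<rightarrow>\<^sub>M PiM UNIV (\<lambda>_. M)"
  by (rule measurable_PiM_single') (auto simp: space_PiM)

lemma (in sequence_space) nn_integral_split_head:
  assumes "case_prod f \<in> borel_measurable (M \<Otimes>\<^sub>M S)"
  shows "(\<integral>\<^sup>+\<omega>. f (\<omega> 0) (\<lambda>i. \<omega> (Suc i)) \<partial>S) = (\<integral>\<^sup>+s. \<integral>\<^sup>+\<omega>. f s \<omega> \<partial>S \<partial>M)"
proof -
  have cons: "(\<lambda>(s, \<omega>). case_nat s \<omega>) \<in> M \<Otimes>\<^sub>M S \<rightarrow>\<^sub>M S"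
    by measurable
  have "(\<lambda>\<omega>. (\<omega> 0, \<lambda>i. \<omega> (Suc i))) \<in> S \<rightarrow>\<^sub>M M \<Otimes>\<^sub>M S"
    by (intro measurable_Pair measurable_component_singleton measurable_shift) auto
  from measurable_compose[OF this assms]
  have head_tail: "(\<lambda>\<omega>. f (\<omega> 0) (\<lambda>i. \<omega> (Suc i))) \<in> borel_measurable S"
    by simp
  have "(\<integral>\<^sup>+\<omega>. f (\<omega> 0) (\<lambda>i. \<omega> (Suc i)) \<partial>S)
        = (\<integral>\<^sup>+\<omega>. f (\<omega> 0) (\<lambda>i. \<omega> (Suc i)) \<partial>distr (M \<Otimes>\<^sub>M S) S (\<lambda>(s, \<omega>). case_nat s \<omega>))"
    by (simp only: PiM_iter)
  also have "\<dots> = (\<integral>\<^sup>+z. f (fst z) (snd z) \<partial>(M \<Otimes>\<^sub>M S))"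
    by (subst nn_integral_distr[OF cons]) (simp_all add: head_tail split_beta')
  also have "\<dots> = (\<integral>\<^sup>+s. \<integral>\<^sup>+\<omega>. f s \<omega> \<partial>S \<partial>M)"
    using P.nn_integral_fst[OF assms] by (simp add: split_beta')
  finally show ?thesis .
qed

lemma measurable_bd_step_head:
  "(\<lambda>\<omega>. bd_step x (snd (\<omega> (0::nat)))) \<in> PiM UNIV (\<lambda>_. driving_factor p) \<rightarrow>\<^sub>M count_space UNIV"
proof -
  have "(\<lambda>s. bd_step x (snd s)) \<in> driving_factor p \<rightarrow>\<^sub>M count_space UNIV"
    unfolding driving_factor_def bd_step_def by measurable
  then show ?thesis
    by (rule measurable_compose[OF measurable_component_singleton, rotated]) simp
qed

lemma pred_rises: "Measurable.pred (PiM UNIV (\<lambda>_. driving_factor p)) (rises C n r x)"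
proof (induction n arbitrary: r x)
  case 0
  show ?case by simp
next
  case (Suc n)
  have "Measurable.pred (PiM UNIV (\<lambda>_. driving_factor p))
          (\<lambda>\<omega>. rises C n (min r (real x)) (bd_step x (snd (\<omega> 0))) (\<lambda>i. \<omega> (Suc i)))"
    by (rule measurable_compose_countable[OF _ measurable_bd_step_head])
      (rule measurable_compose[OF measurable_shift Suc.IH])
  then show ?case by simp
qed

lemma sets_rises:
  "{\<omega> \<in> space (driving_space p). \<exists>n. rises C n r x \<omega>} \<in> sets (driving_space p)"
proof -
  have "Measurable.pred (driving_space p) (\<lambda>\<omega>. \<exists>n. rises C n r x \<omega>)"
    unfolding driving_space_eq_PiM by (intro pred_intros_countable pred_rises)
  then show ?thesis by (simp add: pred_def)
qed

text \<open>Optional stopping for the supermartingale \<open>rise_potential\<close>, which is at least 1 once the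
  chain has risen.\<close>
lemma nn_integral_rises_le:
  assumes p: "0 \<le> p" "p \<le> 1/2" and C: "1 \<le> C" and K: "max r 1 \<le> 2^K"
  shows "(\<integral>\<^sup>+\<omega>. (if rises C n r x \<omega> then 1 else 0) \<partial>PiM UNIV (\<lambda>_. driving_factor p))
         \<le> ennreal (rise_potential C K r x)"
proof -
  interpret F: prob_space "driving_factor p" by (rule prob_space_driving_factor)
  interpret S: sequence_space "driving_factor p" ..
  show ?thesis
    using K
  proof (induction n arbitrary: r x)
    case (0 r x)
    show ?case
    proof (cases "C * max r 1 < real x")
      case True
      then have "1 \<le> rise_potential C K r x"
        using rise_potential_ge_1 C 0 by simp
      then show ?thesis using S.emeasure_space_1 by (simp add: ennreal_leI)
    qed simp
  next
    case (Suc n r x)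
    let ?S = "PiM UNIV (\<lambda>_. driving_factor p)" and ?r = "min r (real x)"
    show ?case
    proof (cases "C * max r 1 < real x")
      case True
      then have "1 \<le> rise_potential C K r x"
        using rise_potential_ge_1 C Suc.prems by simp
      then show ?thesis using S.emeasure_space_1 True by (simp add: ennreal_leI)
    next
      case False
      have "(\<lambda>z. if rises C n ?r (bd_step x (snd (fst z))) (snd z) then 1 else 0 :: ennreal)
              \<in> borel_measurable (driving_factor p \<Otimes>\<^sub>M ?S)"
      proof (rule measurable_compose_countable[where f = "\<lambda>y z. if rises C n ?r y (snd z) then 1 else 0"])
        show "(\<lambda>z. bd_step x (snd (fst z))) \<in> driving_factor p \<Otimes>\<^sub>M ?S \<rightarrow>\<^sub>M count_space UNIV"
          unfolding driving_factor_def bd_step_def by measurable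
        show "(\<lambda>z. if rises C n ?r y (snd z) then 1 else 0 :: ennreal)
              \<in> borel_measurable (driving_factor p \<Otimes>\<^sub>M ?S)" for y
          using pred_rises[where p = p and C = C and n = n and r = ?r and x = y] by measurable
      qed
      then have "case_prod (\<lambda>s \<omega>. if rises C n ?r (bd_step x (snd s)) \<omega> then 1 else 0 :: ennreal)
              \<in> borel_measurable (driving_factor p \<Otimes>\<^sub>M ?S)"
        by (simp add: split_beta')
      then have "(\<integral>\<^sup>+\<omega>. (if rises C (Suc n) r x \<omega> then 1 else 0) \<partial>?S)
            = (\<integral>\<^sup>+s. \<integral>\<^sup>+\<omega>. (if rises C n ?r (bd_step x (snd s)) \<omega> then 1 else 0) \<partial>?S \<partial>driving_factor p)"
        using False by (simp add: S.nn_integral_split_head[symmetric])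
      also have "\<dots> \<le> (\<integral>\<^sup>+s. ennreal (rise_potential C K ?r (bd_step x (snd s))) \<partial>driving_factor p)"
        using Suc.prems by (intro nn_integral_mono Suc.IH) auto
      also have "\<dots> = ennreal (rise_potential C K ?r (bd_step x True)) * ennreal p
                        + ennreal (rise_potential C K ?r (bd_step x False)) * ennreal (1 - p)"
        using p by (intro nn_integral_driving_factor_snd) auto
      also have "\<dots> = ennreal (p * rise_potential C K ?r (bd_step x True)
                              + (1 - p) * rise_potential C K ?r (bd_step x False))"
        using p C rise_potential_nonneg[of C K]
        by (simp add: ennreal_mult'' ennreal_plus mult.commute)
      also have "\<dots> \<le> ennreal (rise_potential C K r x)"
        using rise_potential_bd_step_le[of C p K r x] p C by (intro ennreal_leI) simp
      finally show ?thesis .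
    qed
  qed
qed

lemma measure_rises_le:
  assumes p: "0 \<le> p" "p \<le> 1/2" and C: "1 \<le> C" and r: "real x \<le> r" "max r 1 \<le> 2^K"
  shows "measure (driving_space p) {\<omega> \<in> space (driving_space p). \<exists>n. rises C n r x \<omega>}
         \<le> (real K + 1) * (4 / C)"
proof -
  let ?S = "PiM UNIV (\<lambda>_. driving_factor p)"
  define B where "B n = {\<omega> \<in> space ?S. rises C n r x \<omega>}" for n
  have B: "B n \<in> sets ?S" for n
    using pred_rises[where p = p and C = C and n = n and r = r and x = x] unfolding B_def pred_def by simp
  have "emeasure ?S (B n) \<le> ennreal (rise_potential C K r x)" for n
  proof -
    have "emeasure ?S (B n) = (\<integral>\<^sup>+\<omega>. indicator (B n) \<omega> \<partial>?S)"
      using B by simp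
    also have "\<dots> = (\<integral>\<^sup>+\<omega>. (if rises C n r x \<omega> then 1 else 0) \<partial>?S)"
      by (intro nn_integral_cong) (simp add: B_def indicator_def)
    also have "\<dots> \<le> ennreal (rise_potential C K r x)"
      by (rule nn_integral_rises_le[OF p C r(2)])
    finally show ?thesis .
  qed
  moreover have "incseq B"
    by (rule incseq_SucI) (auto simp: B_def intro: rises_Suc simp del: rises.simps)
  ultimately have "emeasure ?S (\<Union>n. B n) \<le> ennreal (rise_potential C K r x)"
    using B by (subst SUP_emeasure_incseq[symmetric]) (auto intro: SUP_least)
  moreover have "{\<omega> \<in> space ?S. \<exists>n. rises C n r x \<omega>} = (\<Union>n. B n)"
    unfolding B_def by auto
  ultimately have "measure ?S {\<omega> \<in> space ?S. \<exists>n. rises C n r x \<omega>} \<le> rise_potential C K r x"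
    using rise_potential_nonneg[of C K r x] C by (simp add: measure_def enn2real_leI)
  also have "\<dots> \<le> (real K + 1) * (4 / C)"
    using rise_potential_le C r(1) by simp
  finally show ?thesis unfolding driving_space_eq_PiM .
qed

lemma bd_chain_later:
  assumes "s \<le> s'"
  shows "bd_chain c z \<omega> s' = 0 \<or> (\<exists>j i. j \<le> i \<and> bd_chain c z \<omega> s = jump_chain z \<omega> j
                                          \<and> bd_chain c z \<omega> s' = jump_chain z \<omega> i)"
proof (cases "\<exists>n. ereal s' < jump_time c z \<omega> n")
  case True
  define m where "m = (LEAST n. ereal s < jump_time c z \<omega> n)"
  define m' where "m' = (LEAST n. ereal s' < jump_time c z \<omega> n)"
  have "ereal s' < jump_time c z \<omega> m'"
    unfolding m'_def using True by (rule LeastI_ex)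
  then have s: "ereal s < jump_time c z \<omega> m'"
    using assms by (meson ereal_less_eq(3) order_le_less_trans)
  then have "m \<le> m'"
    unfolding m_def by (rule Least_le)
  moreover have "bd_chain c z \<omega> s' = jump_chain z \<omega> (m' - 1)"
    unfolding bd_chain_def m'_def using True by simp
  moreover have "bd_chain c z \<omega> s = jump_chain z \<omega> (m - 1)"
    unfolding bd_chain_def m_def using s by auto
  ultimately show ?thesis
    by (intro disjI2 exI[of _ "m - 1"] exI[of _ "m' - 1"]) auto
qed (simp add: bd_chain_def)

lemma logNp_nonneg: "0 \<le> logNp N v"
  unfolding logNp_def by simp

lemma logNp_le_add:
  assumes "0 < \<delta>" "v' \<le> real N powr \<delta> * max v 1"
  shows "logNp N v' \<le> logNp N v + \<delta>"
proof -
  consider "N \<le> 1" | "v' \<le> 0" | "1 < N" "0 < v'"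
    by linarith
  then show ?thesis
  proof cases
    case 1
    then have "ln (real N) = 0" by (cases N) auto
    then show ?thesis
      using assms(1) logNp_nonneg[of N v] by (simp add: logNp_def)
  next
    case 2
    then show ?thesis
      using assms(1) logNp_nonneg[of N v] by (simp add: logNp_def)
  next
    case 3
    then have lnN: "0 < ln (real N)" by simp
    have "ln v' \<le> ln (real N powr \<delta> * max v 1)"
      using 3 assms(2) by (subst ln_le_cancel_iff) auto
    also have "\<dots> = \<delta> * ln (real N) + ln (max v 1)"
      using 3 by (simp add: ln_mult ln_powr)
    finally have "ln v' / ln (real N) \<le> \<delta> + ln (max v 1) / ln (real N)"
      using lnN by (simp add: field_simps)
    moreover have "ln (max v 1) / ln (real N) \<le> logNp N v"
      using logNp_nonneg[of N v] by (cases "1 \<le> v") (auto simp: logNp_def max_def)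
    ultimately show ?thesis
      using 3 assms(1) logNp_nonneg[of N v] by (simp add: logNp_def)
  qed
qed

lemma logNp_bd_chain_le_add:
  assumes "0 < \<delta>" "\<forall>n. \<not> rises (real N powr \<delta>) n r z \<omega>" "s \<le> s'"
  shows "logNp N (real (bd_chain c z \<omega> s')) \<le> logNp N (real (bd_chain c z \<omega> s)) + \<delta>"
proof (cases "N = 0")
  case True
  then show ?thesis
    using assms(1) logNp_nonneg by (simp add: logNp_def)
next
  case False
  then have C: "1 \<le> real N powr \<delta>"
    using assms(1) by (intro ge_one_powr_ge_zero) auto
  have "real (bd_chain c z \<omega> s') \<le> real N powr \<delta> * max (real (bd_chain c z \<omega> s)) 1"
    using bd_chain_later[OF assms(3), of c z \<omega>]
  proof
    assume "\<exists>j i. j \<le> i \<and> bd_chain c z \<omega> s = jump_chain z \<omega> j \<and> bd_chain c z \<omega> s' = jump_chain z \<omega> i"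
    then show ?thesis
      using jump_chain_le_if_not_rises[OF C assms(2)[rule_format]] by auto
  qed simp
  then show ?thesis
    by (rule logNp_le_add[OF assms(1)])
qed

lemma running_max_diff_le:
  fixes Y :: "real \<Rightarrow> real"
  assumes "\<And>t u. t \<le> u \<Longrightarrow> Y u \<le> Y t + \<delta>" and "a \<le> T"
  shows "(SUP t\<in>{a..T}. \<bar>(SUP u\<in>{t..T}. Y u) - Y t\<bar>) \<le> \<delta>"
proof (rule cSUP_least)
  fix t assume t: "t \<in> {a..T}"
  then have "(SUP u\<in>{t..T}. Y u) \<le> Y t + \<delta>"
    using assms(1) by (intro cSUP_least) auto
  moreover have "Y t \<le> (SUP u\<in>{t..T}. Y u)"
    using t assms(1) by (intro cSUP_upper bdd_aboveI2[of _ _ "Y t + \<delta>"]) auto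
  ultimately show "\<bar>(SUP u\<in>{t..T}. Y u) - Y t\<bar> \<le> \<delta>"
    by simp
qed (use assms(2) in simp)

lemma measure_rises_tendsto_0:
  assumes "0 < \<delta>" and p: "\<And>N. 0 \<le> p N \<and> p N \<le> 1/2"
    and z: "\<forall>\<^sub>F N in sequentially. z N \<le> N"
  shows "(\<lambda>N. measure (driving_space (p N))
           {\<omega> \<in> space (driving_space (p N)). \<exists>n. rises (real N powr \<delta>) n (real (z N)) (z N) \<omega>})
         \<longlonglongrightarrow> 0"
proof (rule tendsto_sandwich[OF _ _ tendsto_const])
  show "\<forall>\<^sub>F N in sequentially.
          measure (driving_space (p N))
            {\<omega> \<in> space (driving_space (p N)). \<exists>n. rises (real N powr \<delta>) n (real (z N)) (z N) \<omega>}
          \<le> (log 2 (real N) + 2) * (4 / real N powr \<delta>)"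
    using z eventually_ge_at_top[of 1]
  proof eventually_elim
    case (elim N)
    define K where "K = nat \<lceil>log 2 (real N)\<rceil>"
    have "0 \<le> log 2 (real N)"
      using elim by simp
    then have K: "log 2 (real N) \<le> real K" "real K \<le> log 2 (real N) + 1"
      unfolding K_def by linarith+
    have "real N = 2 powr log 2 (real N)" using elim by simp
    also have "\<dots> \<le> 2 powr real K"
      using K(1) by (intro powr_mono) auto
    also have "\<dots> = 2 ^ K"
      by (simp add: powr_realpow)
    finally have "max (real (z N)) 1 \<le> 2 ^ K"
      using elim by simp
    then have "measure (driving_space (p N))
            {\<omega> \<in> space (driving_space (p N)). \<exists>n. rises (real N powr \<delta>) n (real (z N)) (z N) \<omega>}
          \<le> (real K + 1) * (4 / real N powr \<delta>)"
      using p[of N] elim \<open>0 < \<delta>\<close> by (intro measure_rises_le ge_one_powr_ge_zero) auto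
    also have "\<dots> \<le> (log 2 (real N) + 2) * (4 / real N powr \<delta>)"
      using K(2) by (intro mult_right_mono) auto
    finally show ?case .
  qed
  show "(\<lambda>N. (log 2 (real N) + 2) * (4 / real N powr \<delta>)) \<longlonglongrightarrow> 0"
    using \<open>0 < \<delta>\<close> by real_asymp
qed simp

lemma nat_floor_div_sqrt_ln_le:
  assumes "3 \<le> N"
  shows "nat \<lfloor>real N / sqrt (ln (real N))\<rfloor> \<le> N"
proof -
  have "exp 1 \<le> real N"
    using exp_le assms by linarith
  then have "1 \<le> sqrt (ln (real N))"
    using assms by (simp add: ln_ge_iff)
  then have "real N / sqrt (ln (real N)) \<le> real N / 1"
    by (intro divide_left_mono) auto
  then show ?thesis by linarith
qed

theorem lemma4p14:
  fixes a b \<epsilon> :: real and \<phi> :: "nat \<Rightarrow> real"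
  assumes a_pos: "a > 0"
    and phi_pos: "\<And>N. 0 < \<phi> N" and phi_le1: "\<And>N. \<phi> N \<le> 1"
    and phi_lim: "(\<lambda>N. - ln (\<phi> N) / ln (real N)) \<longlonglongrightarrow> b"
    and b_nonneg: "0 \<le> b" and b_lt1: "b < 1"
    and eps_pos: "\<epsilon> > 0"
  defines "tab \<equiv> (1 - b) / a"
  defines "M \<equiv> (\<lambda>N. driving_space (1 / (2 + a * \<phi> N)))"
  defines "z0 \<equiv> (\<lambda>N::nat. nat \<lfloor>real N / sqrt (ln (real N))\<rfloor>)"
  defines "Y \<equiv> (\<lambda>N \<omega> t. logNp N (real (bd_chain (a * \<phi> N) (z0 N) \<omega>
                                           (t / \<phi> N * ln (real N)))))"
  defines "Yt \<equiv> (\<lambda>N \<omega> t. (SUP u\<in>{t..tab + \<epsilon>}. Y N \<omega> u))"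
  defines "D \<equiv> (\<lambda>N \<omega>. (SUP t\<in>{0..tab + \<epsilon>}. \<bar>Yt N \<omega> t - Y N \<omega> t\<bar>))"
  shows "\<forall>\<delta>>0. \<exists>A. (\<forall>N. A N \<in> sets (M N)
                      \<and> {\<omega> \<in> space (M N). \<delta> < D N \<omega>} \<subseteq> A N)
              \<and> (\<lambda>N. measure (M N) (A N)) \<longlonglongrightarrow> 0"
proof (intro allI impI)
  \<comment> \<open>The bound is uniform in time, so of the hypotheses on \<open>\<phi>\<close> and \<open>b\<close> only \<open>\<phi> > 0\<close> and
    \<open>tab + \<epsilon> \<ge> 0\<close> are used.\<close>
  fix \<delta> :: real
  assume "0 < \<delta>"
  define A where "A N = {\<omega> \<in> space (M N). \<exists>n. rises (real N powr \<delta>) n (real (z0 N)) (z0 N) \<omega>}" for N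
  have "D N \<omega> \<le> \<delta>" if \<omega>: "\<omega> \<in> space (M N)" "\<omega> \<notin> A N" for N \<omega>
  proof -
    have "0 \<le> ln (real N)"
      by (cases N) auto
    then have "Y N \<omega> u \<le> Y N \<omega> t + \<delta>" if "t \<le> u" for t u
      unfolding Y_def using \<open>0 < \<delta>\<close> \<omega> \<open>t \<le> u\<close> phi_pos[of N]
      by (intro logNp_bd_chain_le_add) (auto simp: A_def intro!: mult_right_mono divide_right_mono)
    moreover have "0 \<le> tab + \<epsilon>"
      unfolding tab_def using a_pos b_lt1 eps_pos by simp
    ultimately show ?thesis
      unfolding D_def Yt_def by (rule running_max_diff_le)
  qed
  then have "{\<omega> \<in> space (M N). \<delta> < D N \<omega>} \<subseteq> A N" for N
    by force
  moreover have "A N \<in> sets (M N)" for N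
    unfolding A_def M_def by (rule sets_rises)
  moreover have "(\<lambda>N. measure (M N) (A N)) \<longlonglongrightarrow> 0"
    unfolding A_def M_def using \<open>0 < \<delta>\<close>
  proof (rule measure_rises_tendsto_0)
    show "0 \<le> 1 / (2 + a * \<phi> N) \<and> 1 / (2 + a * \<phi> N) \<le> 1/2" for N
      using mult_pos_pos[OF a_pos phi_pos[of N]] by (simp add: field_simps)
    show "\<forall>\<^sub>F N in sequentially. z0 N \<le> N"
      unfolding z0_def using eventually_ge_at_top[of 3] by eventually_elim (rule nat_floor_div_sqrt_ln_le)
  qed
  ultimately show "\<exists>A. (\<forall>N. A N \<in> sets (M N) \<and> {\<omega> \<in> space (M N). \<delta> < D N \<omega>} \<subseteq> A N)
                      \<and> (\<lambda>N. measure (M N) (A N)) \<longlonglongrightarrow> 0"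
    by blast
qed

end
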